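(* Let $A$ be a set with $n$ elements. The $\square$-map $p_A:Y^A\to\tilde Z_n$, $p_A(c,<)=z^k_{|c^{-1}(1)|}$ for $(c,<)\in Y^A[k]$, is $\Sigma_A$-invariant, and the induced $\square$-map $Y^A/\Sigma_A\to\tilde Z_n$ from the orbit $\square$-set (with $(Y^A/\Sigma_A)[k]=Y^A[k]/\Sigma_A$) is an isomorphism of $\square$-sets.
   Context: A precubical set ($\square$-set) $K$ is a sequence of pairwise disjoint sets $(K[n])_{n\ge0}$ with face maps $d^\varepsilon_i:K[n]\to K[n-1]$ ($1\le i\le n$, $\varepsilon\in\{0,1\}$) satisfying $d^\varepsilon_i d^\eta_j=d^\eta_{j-1}d^\varepsilon_i$ for $i<j$; $\square$-maps are families of maps $K[n]\to L[n]$ commuting with face maps. $\tilde Z_n$ is the $\square$-set with $\tilde Z_n[k]=\{z^k_j:0\le j\le n-k\}$ ($\emptyset$ for $k>n$) and $d^\varepsilon_i(z^k_j)=z^{k-1}_{j+\varepsilon}$. $Y^A$ is the $\square$-set where $Y^A[k]$ is the set of pairs $(c,<)$ with $c:A\to\{0,*,1\}$, $|c^{-1}( * )|=k$, and $<$ a strict total order on $c^{-1}( * )$; if $c^{-1}( * )=\{a_1<\dots<a_k\}$ then $d^\varepsilon_i(c,<)=(c',<')$ where $c'(a_i)=\varepsilon$, $c'=c$ elsewhere, and $<'$ is the restriction of $<$ to $c^{-1}( * )\setminus\{a_i\}$. $\Sigma_A$ acts on $Y^A$ from the right by $(c,<)\sigma=(c\circ\sigma,<\sigma)$, where $a\,(<\sigma)\,b$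 iff $\sigma(a)<\sigma(b)$. *)

theory Defs
  imports "HOL-Library.FuncSet" "HOL-Combinatorics.Permutations"
begin

text \<open>Since the K n are pairwise
  disjoint, the degree n of a cell is determined by the cell, so the face maps
  need not carry n as an argument.\<close>

definition precubical_set :: "(nat \<Rightarrow> 'x set) \<Rightarrow> (nat \<Rightarrow> nat \<Rightarrow> 'x \<Rightarrow> 'x) \<Rightarrow> bool" where
  "precubical_set K d \<longleftrightarrow>
     (\<forall>m n. m \<noteq> n \<longrightarrow> K m \<inter> K n = {}) \<and>
     (\<forall>n i e x. x \<in> K n \<and> 1 \<le> i \<and> i \<le> n \<and> e \<le> 1 \<longrightarrow> d i e x \<in> K (n - 1)) \<and>
     (\<forall>n i j e f x. x \<in> K n \<and> 1 \<le> i \<and> i < j \<and> j \<le> n \<and> e \<le> 1 \<and> f \<le> 1 \<longrightarrow>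
         d i e (d j f x) = d (j - 1) f (d i e x))"

definition cube_map ::
  "(nat \<Rightarrow> 'x set) \<Rightarrow> (nat \<Rightarrow> nat \<Rightarrow> 'x \<Rightarrow> 'x) \<Rightarrow>
   (nat \<Rightarrow> 'y set) \<Rightarrow> (nat \<Rightarrow> nat \<Rightarrow> 'y \<Rightarrow> 'y) \<Rightarrow> ('x \<Rightarrow> 'y) \<Rightarrow> bool" where
  "cube_map K d L d' f \<longleftrightarrow>
     (\<forall>n x. x \<in> K n \<longrightarrow> f x \<in> L n) \<and>
     (\<forall>n i e x. x \<in> K n \<and> 1 \<le> i \<and> i \<le> n \<and> e \<le> 1 \<longrightarrow> f (d i e x) = d' i e (f x))"

definition cube_iso ::
  "(nat \<Rightarrow> 'x set) \<Rightarrow> (nat \<Rightarrow> nat \<Rightarrow> 'x \<Rightarrow> 'x) \<Rightarrow>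
   (nat \<Rightarrow> 'y set) \<Rightarrow> (nat \<Rightarrow> nat \<Rightarrow> 'y \<Rightarrow> 'y) \<Rightarrow> ('x \<Rightarrow> 'y) \<Rightarrow> bool" where
  "cube_iso K d L d' f \<longleftrightarrow> cube_map K d L d' f \<and>
     (\<exists>g. cube_map L d' K d g \<and>
          (\<forall>n. \<forall>x\<in>K n. g (f x) = x) \<and> (\<forall>n. \<forall>y\<in>L n. f (g y) = y))"

text \<open>The cell z^k_j is represented by the pair (k, j).\<close>
definition Zt :: "nat \<Rightarrow> nat \<Rightarrow> (nat \<times> nat) set" where
  "Zt n k = (if k \<le> n then {(k, j) | j. j \<le> n - k} else {})"

definition Zt_face :: "nat \<Rightarrow> nat \<Rightarrow> nat \<times> nat \<Rightarrow> nat \<times> nat" where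
  "Zt_face i e z = (fst z - 1, snd z + e)"

datatype cval = C0 | CS | C1   (* 0, *, 1 *)

definition stars :: "'a set \<Rightarrow> ('a \<Rightarrow> cval) \<Rightarrow> 'a set" where
  "stars A c = {a \<in> A. c a = CS}"

definition Y :: "'a set \<Rightarrow> nat \<Rightarrow> (('a \<Rightarrow> cval) \<times> ('a \<times> 'a) set) set" where
  "Y A k = {(c, r). c \<in> A \<rightarrow>\<^sub>E UNIV \<and> card (stars A c) = k \<and>
              r \<subseteq> stars A c \<times> stars A c \<and> trans r \<and> irrefl r \<and> total_on (stars A c) r}"

text \<open>The i-th element (1-based) of S in the order r.\<close>
definition ord_nth :: "('a \<times> 'a) set \<Rightarrow> 'a set \<Rightarrow> nat \<Rightarrow> 'a" where
  "ord_nth r S i = (THE a. a \<in> S \<and> card {b \<in> S. (b, a) \<in> r} + 1 = i)"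

definition Y_face :: "'a set \<Rightarrow> nat \<Rightarrow> nat \<Rightarrow> ('a \<Rightarrow> cval) \<times> ('a \<times> 'a) set
                        \<Rightarrow> ('a \<Rightarrow> cval) \<times> ('a \<times> 'a) set" where
  "Y_face A i e x =
     (let c = fst x; r = snd x; S = stars A c; a = ord_nth r S i; S' = S - {a}
      in (c(a := (if e = 0 then C0 else C1)), r \<inter> (S' \<times> S')))"

definition Y_act :: "('a \<Rightarrow> 'a) \<Rightarrow> ('a \<Rightarrow> cval) \<times> ('a \<times> 'a) set
                       \<Rightarrow> ('a \<Rightarrow> cval) \<times> ('a \<times> 'a) set" where
  "Y_act \<sigma> x = (fst x \<circ> \<sigma>, {(a, b). (\<sigma> a, \<sigma> b) \<in> snd x})"

definition pA :: "'a set \<Rightarrow> ('a \<Rightarrow> cval) \<times> ('a \<times> 'a) set \<Rightarrow> nat \<times> nat" where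
  "pA A x = (card (stars A (fst x)), card {a \<in> A. fst x a = C1})"

definition Y_orbit :: "'a set \<Rightarrow> ('a \<Rightarrow> cval) \<times> ('a \<times> 'a) set
                         \<Rightarrow> (('a \<Rightarrow> cval) \<times> ('a \<times> 'a) set) set" where
  "Y_orbit A x = {Y_act \<sigma> x | \<sigma>. \<sigma> permutes A}"

definition Yq :: "'a set \<Rightarrow> nat \<Rightarrow> (('a \<Rightarrow> cval) \<times> ('a \<times> 'a) set) set set" where
  "Yq A k = Y_orbit A ` Y A k"

definition Yq_face :: "'a set \<Rightarrow> nat \<Rightarrow> nat \<Rightarrow> (('a \<Rightarrow> cval) \<times> ('a \<times> 'a) set) set
                         \<Rightarrow> (('a \<Rightarrow> cval) \<times> ('a \<times> 'a) set) set" where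
  "Yq_face A i e Q = Y_orbit A (Y_face A i e (SOME x. x \<in> Q))"

definition pA_bar :: "'a set \<Rightarrow> (('a \<Rightarrow> cval) \<times> ('a \<times> 'a) set) set \<Rightarrow> nat \<times> nat" where
  "pA_bar A Q = pA A (SOME x. x \<in> Q)"

end

theory Submission
  imports Defs
begin

text \<open>A cell (c, <) of Y^A is determined up to the action of Sigma_A by its number k of stars
  and its number j of ones: for two cells with the same counts, the unique order isomorphism
  between their starred elements, glued with arbitrary bijections between their 1-fibres and
  between their 0-fibres, is a permutation of A carrying one cell to the other. Both counts are
  invariant, and the face d^e_i turns one star into e, so it lowers k by one and raises j by e,
  which is the face map of tilde Z_n. Hence the orbits are exactly the fibres of p_A, and since
  every z^k_j with k + j <= n is hit, the fibre map z |-> p_A^-1(z) inverts the induced map.\<close>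

text \<open>The rank is 0-based, whereas ord_nth counts from 1.\<close>

definition order_rank :: "('a \<times> 'a) set \<Rightarrow> 'a set \<Rightarrow> 'a \<Rightarrow> nat" where
  "order_rank r S a = card {b \<in> S. (b, a) \<in> r}"

locale finite_strict_total_order =
  fixes r :: "('a \<times> 'a) set" and S :: "'a set"
  assumes finite_carrier: "finite S" and relation_on_carrier: "r \<subseteq> S \<times> S"
    and transitive: "trans r" and irreflexive: "irrefl r" and total: "total_on S r"
begin

lemma order_rank_strict_mono:
  assumes "(a, b) \<in> r"
  shows "order_rank r S a < order_rank r S b"
proof -
  have "a \<in> S" "(a, a) \<notin> r"
    using assms relation_on_carrier irreflexive by (auto simp: irrefl_def)
  then have "{x \<in> S. (x, a) \<in> r} \<subset> {x \<in> S. (x, b) \<in> r}"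
    using assms transitive by (auto dest: transD)
  then show ?thesis
    unfolding order_rank_def using finite_carrier by (simp add: psubset_card_mono)
qed

lemma order_rank_less_iff:
  assumes "a \<in> S" "b \<in> S"
  shows "order_rank r S a < order_rank r S b \<longleftrightarrow> (a, b) \<in> r"
  using assms total order_rank_strict_mono
  by (metis less_asym less_irrefl total_on_def)

lemma inj_on_order_rank: "inj_on (order_rank r S) S"
  by (rule inj_onI) (metis order_rank_strict_mono less_irrefl total total_on_def)

lemma order_rank_less_card: "a \<in> S \<Longrightarrow> order_rank r S a < card S"
  unfolding order_rank_def using finite_carrier irreflexive
  by (intro psubset_card_mono) (auto simp: irrefl_def)

lemma bij_betw_order_rank: "bij_betw (order_rank r S) S {..<card S}"
proof -
  have "order_rank r S ` S \<subseteq> {..<card S}"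
    using order_rank_less_card by auto
  moreover have "card (order_rank r S ` S) = card {..<card S}"
    using card_image[OF inj_on_order_rank] by simp
  ultimately show ?thesis
    using inj_on_order_rank by (simp add: bij_betw_def card_subset_eq)
qed

lemma ord_nth_mem:
  assumes "1 \<le> i" "i \<le> card S"
  shows "ord_nth r S i \<in> S"
proof -
  have "i - 1 \<in> order_rank r S ` S"
    using assms bij_betw_order_rank by (simp add: bij_betw_def)
  then obtain a where a: "a \<in> S" "order_rank r S a = i - 1"
    by (metis imageE)
  have "\<exists>!a. a \<in> S \<and> card {b \<in> S. (b, a) \<in> r} + 1 = i"
    using a assms inj_on_order_rank
    by (intro ex1I[of _ a]) (auto simp: order_rank_def inj_on_def)
  then show ?thesis
    unfolding ord_nth_def by (rule theI'[THEN conjunct1])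
qed

lemma remove_element: "finite_strict_total_order (r \<inter> (S - {a}) \<times> (S - {a})) (S - {a})"
  using finite_carrier transitive irreflexive total
  by unfold_locales (auto simp: trans_def irrefl_def total_on_def)

lemma bij_vimage:
  assumes "bij f"
  shows "finite_strict_total_order {(a, b). (f a, f b) \<in> r} (f -` S)"
proof
  show "finite (f -` S)"
    using assms finite_carrier by (simp add: bij_def finite_vimageI)
  show "{(a, b). (f a, f b) \<in> r} \<subseteq> f -` S \<times> f -` S"
    using relation_on_carrier by auto
  show "trans {(a, b). (f a, f b) \<in> r}"
    using transitive by (auto simp: trans_def)
  show "irrefl {(a, b). (f a, f b) \<in> r}"
    using irreflexive by (auto simp: irrefl_def)
  show "total_on (f -` S) {(a, b). (f a, f b) \<in> r}"
    using total assms by (auto simp: total_on_def bij_def inj_eq)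
qed

end

lemma finite_strict_total_orders_isomorphic:
  assumes r: "finite_strict_total_order r S" and r': "finite_strict_total_order r' S'"
    and card_eq: "card S' = card S"
  obtains h where "bij_betw h S' S" "\<And>a b. a \<in> S' \<Longrightarrow> b \<in> S' \<Longrightarrow> (h a, h b) \<in> r \<longleftrightarrow> (a, b) \<in> r'"
proof
  interpret r: finite_strict_total_order r S by (fact r)
  interpret r': finite_strict_total_order r' S' by (fact r')
  define h where "h = inv_into S (order_rank r S) \<circ> order_rank r' S'"
  show "bij_betw h S' S"
    unfolding h_def using r.bij_betw_order_rank r'.bij_betw_order_rank card_eq
    by (auto intro: bij_betw_trans bij_betw_inv_into)
  then have "h a \<in> S" and "order_rank r S (h a) = order_rank r' S' a" if "a \<in> S'" for a
    using that r.bij_betw_order_rank r'.order_rank_less_card card_eq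
    by (auto simp: h_def bij_betw_def intro: f_inv_into_f)
  then show "(h a, h b) \<in> r \<longleftrightarrow> (a, b) \<in> r'" if "a \<in> S'" "b \<in> S'" for a b
    using that r.order_rank_less_iff r'.order_rank_less_iff by metis
qed

lemma inv_image_eq_if_iso_on:
  assumes "r \<subseteq> S \<times> S" "r' \<subseteq> S' \<times> S'" "\<And>a. a \<in> S' \<longleftrightarrow> f a \<in> S"
    and "\<And>a b. a \<in> S' \<Longrightarrow> b \<in> S' \<Longrightarrow> (f a, f b) \<in> r \<longleftrightarrow> (a, b) \<in> r'"
  shows "inv_image r f = r'"
  using assms unfolding inv_image_def by blast

lemma permutes_from_fibre_bijections:
  assumes h: "\<And>v. bij_betw (h v) {a \<in> A. c' a = v} {a \<in> A. c a = v}"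
    and outside: "\<And>a. a \<notin> A \<Longrightarrow> c' a = c a"
  obtains \<sigma> where "\<sigma> permutes A" "c \<circ> \<sigma> = c'" "\<And>a. a \<in> A \<Longrightarrow> \<sigma> a = h (c' a) a"
proof
  define \<sigma> where "\<sigma> a = (if a \<in> A then h (c' a) a else a)" for a
  have fibre: "\<sigma> a \<in> A" "c (\<sigma> a) = c' a" if "a \<in> A" for a
    using that h[of "c' a"] by (auto simp: \<sigma>_def bij_betw_def)
  have "inj_on \<sigma> A"
  proof (rule inj_onI)
    fix a b assume "a \<in> A" "b \<in> A" "\<sigma> a = \<sigma> b"
    moreover from this have "c' a = c' b" using fibre by metis
    ultimately show "a = b"
      using h[of "c' a"] by (auto simp: \<sigma>_def bij_betw_def inj_on_def)
  qed
  moreover have "\<sigma> ` A = A"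
  proof (intro equalityI subsetI)
    fix b assume "b \<in> A"
    then obtain a where "a \<in> A" "c' a = c b" "b = h (c b) a"
      using h[of "c b"] by (auto simp: bij_betw_def)
    then have "\<sigma> a = b" by (simp add: \<sigma>_def)
    with \<open>a \<in> A\<close> show "b \<in> \<sigma> ` A" by blast
  qed (use fibre in auto)
  ultimately show "\<sigma> permutes A"
    by (intro bij_imp_permutes) (auto simp: bij_betw_def \<sigma>_def)
  show "c \<circ> \<sigma> = c'"
    using fibre outside by (auto simp: \<sigma>_def)
  show "\<sigma> a = h (c' a) a" if "a \<in> A" for a
    using that by (simp add: \<sigma>_def)
qed

lemma Y_iff:
  assumes "finite A"
  shows "(c, r) \<in> Y A k \<longleftrightarrow>
    c \<in> A \<rightarrow>\<^sub>E UNIV \<and> card (stars A c) = k \<and> finite_strict_total_order r (stars A c)"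
  using assms by (auto simp: Y_def finite_strict_total_order_def stars_def)

lemma card_stars_ones_zeros:
  assumes "finite A"
  shows "card (stars A c) + card {a \<in> A. c a = C1} + card {a \<in> A. c a = C0} = card A"
proof -
  have "A = stars A c \<union> {a \<in> A. c a = C1} \<union> {a \<in> A. c a = C0}"
    unfolding stars_def using cval.exhaust by blast
  moreover have "card (stars A c \<union> {a \<in> A. c a = C1} \<union> {a \<in> A. c a = C0}) =
      card (stars A c) + card {a \<in> A. c a = C1} + card {a \<in> A. c a = C0}"
    using assms by (subst card_Un_disjoint; (subst card_Un_disjoint)?) (auto simp: stars_def)
  ultimately show ?thesis by simp
qed

lemma fst_pA: "finite A \<Longrightarrow> x \<in> Y A k \<Longrightarrow> fst (pA A x) = k"
  by (cases x) (simp add: Y_iff pA_def)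

lemma pA_in_Zt: "finite A \<Longrightarrow> x \<in> Y A k \<Longrightarrow> pA A x \<in> Zt (card A) k"
  using card_stars_ones_zeros[of A "fst x"]
  by (cases x) (auto simp: Y_iff pA_def Zt_def)

lemma Y_face_cell:
  assumes "finite A" and "x \<in> Y A k" and i: "1 \<le> i" "i \<le> k" and "e \<le> 1"
  shows "Y_face A i e x \<in> Y A (k - 1)" and "pA A (Y_face A i e x) = Zt_face i e (pA A x)"
proof -
  obtain c r where x_eq: "x = (c, r)" by fastforce
  with \<open>x \<in> Y A k\<close> have x: "(c, r) \<in> Y A k" by simp
  define S where "S = stars A c"
  define a where "a = ord_nth r S i"
  define v where "v = (if e = 0 then C0 else C1)"
  interpret finite_strict_total_order r S
    using x \<open>finite A\<close> by (simp add: Y_iff S_def)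
  have "a \<in> S"
    unfolding a_def using i x \<open>finite A\<close> by (intro ord_nth_mem) (simp_all add: Y_iff S_def)
  then have a: "a \<in> A" "c a = CS"
    by (simp_all add: S_def stars_def)
  have face: "Y_face A i e (c, r) = (c(a := v), r \<inter> (S - {a}) \<times> (S - {a}))"
    by (simp add: Y_face_def Let_def S_def a_def v_def)
  have stars_face: "stars A (c(a := v)) = S - {a}"
    using a by (auto simp: S_def stars_def v_def)
  have ones_face: "{b \<in> A. (c(a := v)) b = C1} = {b \<in> A. c b = C1} \<union> (if e = 1 then {a} else {})"
    using a \<open>e \<le> 1\<close> by (auto simp: v_def)
  show "Y_face A i e x \<in> Y A (k - 1)"
    unfolding x_eq using x \<open>a \<in> S\<close> \<open>finite A\<close> a remove_element
    by (simp add: face stars_face Y_iff S_def PiE_def extensional_def)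
  have "card {b \<in> A. (c(a := v)) b = C1} = card {b \<in> A. c b = C1} + e"
    using ones_face a \<open>e \<le> 1\<close> \<open>finite A\<close> by (cases "e = 1") auto
  then show "pA A (Y_face A i e x) = Zt_face i e (pA A x)"
    unfolding x_eq using \<open>a \<in> S\<close> finite_carrier by (simp add: face stars_face pA_def Zt_face_def S_def)
qed

lemma Y_act_cell:
  assumes "finite A" and \<sigma>: "\<sigma> permutes A" and "x \<in> Y A k"
  shows "Y_act \<sigma> x \<in> Y A k" and "pA A (Y_act \<sigma> x) = pA A x"
proof -
  obtain c r where x_eq: "x = (c, r)" by fastforce
  with \<open>x \<in> Y A k\<close> have x: "(c, r) \<in> Y A k" by simp
  have bij: "bij \<sigma>" using \<sigma> by (rule permutes_bij)
  have fibre: "{a \<in> A. (c \<circ> \<sigma>) a = v} = \<sigma> -` {a \<in> A. c a = v}" for v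
    using permutes_in_image[OF \<sigma>] by auto
  have card_fibre: "card {a \<in> A. (c \<circ> \<sigma>) a = v} = card {a \<in> A. c a = v}" for v
    unfolding fibre using bij by (intro card_vimage_inj) (auto simp: bij_def)
  interpret finite_strict_total_order r "stars A c"
    using x \<open>finite A\<close> by (simp add: Y_iff)
  have "c \<circ> \<sigma> \<in> A \<rightarrow>\<^sub>E UNIV"
    using x \<open>finite A\<close> permutes_not_in[OF \<sigma>] by (auto simp: Y_iff PiE_def extensional_def)
  then show "Y_act \<sigma> x \<in> Y A k"
    unfolding x_eq using x \<open>finite A\<close> bij_vimage[OF bij] card_fibre[of CS] fibre[of CS]
    by (simp add: Y_act_def Y_iff stars_def)
  show "pA A (Y_act \<sigma> x) = pA A x"
    unfolding x_eq using card_fibre by (simp add: Y_act_def pA_def stars_def)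
qed

lemma Y_cell_with_pA:
  assumes "finite A" and "k \<le> card A" and "j \<le> card A - k"
  shows "\<exists>x \<in> Y A k. pA A x = (k, j)"
proof -
  obtain g where g: "bij_betw g A {..<card A}"
    using \<open>finite A\<close> by (metis bij_betw_inv_into ex_bij_betw_nat_finite lessThan_atLeast0)
  have card_level: "card {a \<in> A. P (g a)} = card {m \<in> {..<card A}. P m}" for P
  proof -
    have "bij_betw g {a \<in> A. P (g a)} {m \<in> {..<card A}. P m}"
      using g by (auto simp: bij_betw_def inj_on_def)
    then show ?thesis by (rule bij_betw_same_card)
  qed
  define c where "c a = (if a \<notin> A then undefined else if g a < k then CS
    else if g a < k + j then C1 else C0)" for a
  define S where "S = stars A c"
  define r where "r = {(a, b). a \<in> S \<and> b \<in> S \<and> g a < g b}"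
  have S: "S = {a \<in> A. g a < k}"
    by (auto simp: S_def stars_def c_def)
  have ones: "{a \<in> A. c a = C1} = {a \<in> A. \<not> g a < k \<and> g a < k + j}"
    by (auto simp: c_def)
  have "{m \<in> {..<card A}. m < k} = {..<k}" "{m \<in> {..<card A}. \<not> m < k \<and> m < k + j} = {k..<k + j}"
    using assms by auto
  then have "card S = k" "card {a \<in> A. c a = C1} = j"
    using card_level[of "\<lambda>m. m < k"] card_level[of "\<lambda>m. \<not> m < k \<and> m < k + j"]
    by (simp_all add: S ones conj_commute)
  moreover have "finite_strict_total_order r S"
    using g \<open>finite A\<close> by unfold_locales
      (auto simp: r_def S trans_def irrefl_def total_on_def bij_betw_def inj_on_def)
  moreover have "c \<in> A \<rightarrow>\<^sub>E UNIV"
    by (auto simp: c_def)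
  ultimately show ?thesis
    using \<open>finite A\<close> by (intro bexI[of _ "(c, r)"]) (simp_all add: Y_iff pA_def S_def)
qed

lemma card_fibres_eq_if_pA_eq:
  assumes "finite A" and "(c, r) \<in> Y A k" and "(c', r') \<in> Y A k"
    and "pA A (c, r) = pA A (c', r')"
  shows "card {a \<in> A. c' a = v} = card {a \<in> A. c a = v}"
  using assms card_stars_ones_zeros[OF \<open>finite A\<close>, of c] card_stars_ones_zeros[OF \<open>finite A\<close>, of c']
  by (cases v) (auto simp: pA_def stars_def Y_iff)

lemma Y_act_transitive:
  assumes "finite A" and "x \<in> Y A k" and "y \<in> Y A k" and "pA A x = pA A y"
  obtains \<sigma> where "\<sigma> permutes A" "Y_act \<sigma> x = y"
proof -
  obtain c r c' r' where x_eq: "x = (c, r)" and y_eq: "y = (c', r')" by fastforce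
  have x: "(c, r) \<in> Y A k" and y: "(c', r') \<in> Y A k"
    using assms x_eq y_eq by simp_all
  have "finite_strict_total_order r (stars A c)" "finite_strict_total_order r' (stars A c')"
    and "card (stars A c') = card (stars A c)"
    using x y \<open>finite A\<close> by (simp_all add: Y_iff)
  then obtain h_stars where h_stars: "bij_betw h_stars (stars A c') (stars A c)"
    and h_stars_iso: "\<And>a b. a \<in> stars A c' \<Longrightarrow> b \<in> stars A c' \<Longrightarrow>
      (h_stars a, h_stars b) \<in> r \<longleftrightarrow> (a, b) \<in> r'"
    using finite_strict_total_orders_isomorphic by blast
  have "\<exists>h. bij_betw h {a \<in> A. c' a = v} {a \<in> A. c a = v}" for v
    using assms card_fibres_eq_if_pA_eq[OF \<open>finite A\<close> x y] x_eq y_eq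
    by (intro finite_same_card_bij) auto
  then obtain h_other where h_other: "\<And>v. bij_betw (h_other v) {a \<in> A. c' a = v} {a \<in> A. c a = v}"
    by metis
  define h where "h v = (if v = CS then h_stars else h_other v)" for v
  have h: "bij_betw (h v) {a \<in> A. c' a = v} {a \<in> A. c a = v}" for v
    using h_stars h_other by (simp add: h_def stars_def)
  have "c \<in> A \<rightarrow>\<^sub>E UNIV" "c' \<in> A \<rightarrow>\<^sub>E UNIV"
    using x y by (simp_all add: Y_def)
  then have outside: "c' a = c a" if "a \<notin> A" for a
    using that by (metis PiE_arb)
  obtain \<sigma> where \<sigma>: "\<sigma> permutes A" and comp: "c \<circ> \<sigma> = c'"
    and \<sigma>_eq: "\<And>a. a \<in> A \<Longrightarrow> \<sigma> a = h (c' a) a"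
    using permutes_from_fibre_bijections[OF h outside] by metis
  have stars': "a \<in> stars A c' \<longleftrightarrow> \<sigma> a \<in> stars A c" for a
    using permutes_in_image[OF \<sigma>] by (auto simp: stars_def simp flip: comp)
  have "\<sigma> a = h_stars a" if "a \<in> stars A c'" for a
    using that by (simp add: \<sigma>_eq h_def stars_def)
  then have "inv_image r \<sigma> = r'"
    using x y stars' h_stars_iso
    by (intro inv_image_eq_if_iso_on[of r "stars A c" r' "stars A c'"]) (simp_all add: Y_def)
  with \<sigma> comp show thesis
    by (intro that) (auto simp: Y_act_def x_eq y_eq inv_image_def)
qed

lemma pA_image_Y:
  assumes "finite A"
  shows "pA A ` Y A k = Zt (card A) k"
proof
  show "pA A ` Y A k \<subseteq> Zt (card A) k"
    using pA_in_Zt assms by blast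
  show "Zt (card A) k \<subseteq> pA A ` Y A k"
  proof
    fix z assume "z \<in> Zt (card A) k"
    then obtain j where "z = (k, j)" "k \<le> card A" "j \<le> card A - k"
      by (auto simp: Zt_def split: if_splits)
    then show "z \<in> pA A ` Y A k"
      using Y_cell_with_pA[OF assms] by (metis image_eqI)
  qed
qed

definition pA_fibre :: "'a set \<Rightarrow> nat \<times> nat \<Rightarrow> (('a \<Rightarrow> cval) \<times> ('a \<times> 'a) set) set" where
  "pA_fibre A z = {x \<in> Y A (fst z). pA A x = z}"

lemma pA_fibre_pA:
  "finite A \<Longrightarrow> x \<in> Y A k \<Longrightarrow> pA_fibre A (pA A x) = {y \<in> Y A k. pA A y = pA A x}"
  by (simp add: pA_fibre_def fst_pA)

lemma Y_orbit_eq_pA_fibre: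
  assumes "finite A" and "x \<in> Y A k"
  shows "Y_orbit A x = pA_fibre A (pA A x)"
proof (intro equalityI subsetI)
  fix y assume "y \<in> Y_orbit A x"
  then obtain \<sigma> where "\<sigma> permutes A" "y = Y_act \<sigma> x"
    by (auto simp: Y_orbit_def)
  then show "y \<in> pA_fibre A (pA A x)"
    using assms Y_act_cell[of A \<sigma> x k] by (simp add: pA_fibre_pA)
next
  fix y assume "y \<in> pA_fibre A (pA A x)"
  then have "y \<in> Y A k" "pA A x = pA A y"
    using assms by (simp_all add: pA_fibre_pA)
  with assms obtain \<sigma> where "\<sigma> permutes A" "Y_act \<sigma> x = y"
    by (rule Y_act_transitive)
  then show "y \<in> Y_orbit A x"
    by (auto simp: Y_orbit_def)
qed

lemma some_in_Y_orbit:
  assumes "finite A" and "x \<in> Y A k"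
  shows "(SOME y. y \<in> Y_orbit A x) \<in> Y A k" and "pA A (SOME y. y \<in> Y_orbit A x) = pA A x"
proof -
  have "x \<in> Y_orbit A x"
    using assms by (simp add: Y_orbit_eq_pA_fibre pA_fibre_pA)
  then have "(SOME y. y \<in> Y_orbit A x) \<in> Y_orbit A x"
    by (rule someI)
  then show "(SOME y. y \<in> Y_orbit A x) \<in> Y A k" "pA A (SOME y. y \<in> Y_orbit A x) = pA A x"
    using assms by (simp_all add: Y_orbit_eq_pA_fibre pA_fibre_pA)
qed

lemma pA_bar_Y_orbit: "finite A \<Longrightarrow> x \<in> Y A k \<Longrightarrow> pA_bar A (Y_orbit A x) = pA A x"
  using some_in_Y_orbit(2) by (simp add: pA_bar_def)

lemma Yq_face_Y_orbit:
  assumes "finite A" "x \<in> Y A k" "1 \<le> i" "i \<le> k" "e \<le> 1"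
  shows "Yq_face A i e (Y_orbit A x) = Y_orbit A (Y_face A i e x)"
proof -
  define y where "y = (SOME y. y \<in> Y_orbit A x)"
  have y: "y \<in> Y A k" "pA A y = pA A x"
    using some_in_Y_orbit[OF assms(1,2)] by (simp_all add: y_def)
  note face_x = Y_face_cell[OF assms] and face_y = Y_face_cell[OF assms(1) y(1) assms(3-5)]
  have "Yq_face A i e (Y_orbit A x) = Y_orbit A (Y_face A i e y)"
    by (simp add: Yq_face_def y_def)
  also have "\<dots> = pA_fibre A (pA A (Y_face A i e y))"
    using assms(1) face_y(1) by (rule Y_orbit_eq_pA_fibre)
  also have "\<dots> = pA_fibre A (pA A (Y_face A i e x))"
    using face_x(2) face_y(2) y(2) by simp
  also have "\<dots> = Y_orbit A (Y_face A i e x)"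
    using assms(1) face_x(1) by (rule Y_orbit_eq_pA_fibre[symmetric])
  finally show ?thesis .
qed

lemma pA_cube_map: "finite A \<Longrightarrow> cube_map (Y A) (Y_face A) (Zt (card A)) Zt_face (pA A)"
  unfolding cube_map_def by (auto simp: pA_in_Zt Y_face_cell(2))

lemma pA_bar_cube_map:
  assumes "finite A"
  shows "cube_map (Yq A) (Yq_face A) (Zt (card A)) Zt_face (pA_bar A)"
  unfolding cube_map_def
proof (intro conjI allI impI)
  fix k Q assume "Q \<in> Yq A k"
  then obtain x where "x \<in> Y A k" "Q = Y_orbit A x"
    by (auto simp: Yq_def)
  with assms show "pA_bar A Q \<in> Zt (card A) k"
    by (simp add: pA_bar_Y_orbit pA_in_Zt)
next
  fix k i e Q assume "Q \<in> Yq A k \<and> 1 \<le> i \<and> i \<le> k \<and> e \<le> (1::nat)"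
  then obtain x where "x \<in> Y A k" "Q = Y_orbit A x" "1 \<le> i" "i \<le> k" "e \<le> 1"
    by (auto simp: Yq_def)
  with assms show "pA_bar A (Yq_face A i e Q) = Zt_face i e (pA_bar A Q)"
    using Y_face_cell[of A x k i e] by (simp add: Yq_face_Y_orbit pA_bar_Y_orbit)
qed

lemma pA_fibre_cube_map:
  assumes "finite A"
  shows "cube_map (Zt (card A)) Zt_face (Yq A) (Yq_face A) (pA_fibre A)"
  unfolding cube_map_def
proof (intro conjI allI impI)
  fix k z assume "z \<in> Zt (card A) k"
  then obtain x where "x \<in> Y A k" "z = pA A x"
    using assms by (auto simp flip: pA_image_Y)
  with assms show "pA_fibre A z \<in> Yq A k"
    by (simp add: Yq_def Y_orbit_eq_pA_fibre[symmetric])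
next
  fix k i e z assume "z \<in> Zt (card A) k \<and> 1 \<le> i \<and> i \<le> k \<and> e \<le> (1::nat)"
  then obtain x where x: "x \<in> Y A k" "z = pA A x" and i: "1 \<le> i" "i \<le> k" and "e \<le> 1"
    using assms by (auto simp flip: pA_image_Y)
  note face = Y_face_cell[OF assms x(1) i \<open>e \<le> 1\<close>]
  have "pA_fibre A (Zt_face i e z) = Y_orbit A (Y_face A i e x)"
    using Y_orbit_eq_pA_fibre[OF assms face(1)] face(2) x(2) by simp
  also have "\<dots> = Yq_face A i e (pA_fibre A z)"
    using Yq_face_Y_orbit[OF assms x(1) i \<open>e \<le> 1\<close>] Y_orbit_eq_pA_fibre[OF assms x(1)] x(2)
    by simp
  finally show "pA_fibre A (Zt_face i e z) = Yq_face A i e (pA_fibre A z)" .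
qed

theorem proposition2p16:
  fixes A :: "'a set" and n :: nat
  assumes "finite A" and "card A = n"
  shows "cube_map (Y A) (Y_face A) (Zt n) Zt_face (pA A)
       \<and> (\<forall>\<sigma> k x. \<sigma> permutes A \<and> x \<in> Y A k \<longrightarrow> pA A (Y_act \<sigma> x) = pA A x)
       \<and> cube_iso (Yq A) (Yq_face A) (Zt n) Zt_face (pA_bar A)"
proof (intro conjI)
  show "cube_map (Y A) (Y_face A) (Zt n) Zt_face (pA A)"
    using pA_cube_map assms by blast
  show "\<forall>\<sigma> k x. \<sigma> permutes A \<and> x \<in> Y A k \<longrightarrow> pA A (Y_act \<sigma> x) = pA A x"
    using Y_act_cell(2) \<open>finite A\<close> by blast
  have "pA_fibre A (pA_bar A Q) = Q" if "Q \<in> Yq A k" for Q k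
  proof -
    obtain x where "x \<in> Y A k" "Q = Y_orbit A x"
      using \<open>Q \<in> Yq A k\<close> by (auto simp: Yq_def)
    with \<open>finite A\<close> show ?thesis
      by (simp add: pA_bar_Y_orbit flip: Y_orbit_eq_pA_fibre)
  qed
  moreover have "pA_bar A (pA_fibre A z) = z" if "z \<in> Zt n k" for z k
  proof -
    have "z \<in> pA A ` Y A k"
      using that assms by (simp add: pA_image_Y)
    then obtain x where "x \<in> Y A k" "z = pA A x"
      by (rule imageE)
    with \<open>finite A\<close> show ?thesis
      by (simp add: pA_bar_Y_orbit Y_orbit_eq_pA_fibre[symmetric])
  qed
  ultimately show "cube_iso (Yq A) (Yq_face A) (Zt n) Zt_face (pA_bar A)"
    unfolding cube_iso_def using pA_bar_cube_map pA_fibre_cube_map assms by blast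
qed

end
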